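(* Let $A \in \mathbb{C}^{m \times p}$, $y \in \mathbb{C}^{m}$, patch-extraction operators $P_1,\dots,P_N \in \{0,1\}^{n \times p}$, and $\nu,\eta,C>0$. Let $$g(W,B,x) = \nu\|Ax-y\|_2^2 + \varphi(W) + \chi(x) + \sum_{j=1}^N \left\{ \|W P_j x - b_j\|_2^2 + \eta^2 \|b_j\|_0\right\},$$ with $\varphi(W)=0$ if $W^HW=I$ and $+\infty$ otherwise, $\chi(x)=0$ if $\|x\|_2\le C$ and $+\infty$ otherwise. Algorithm A1 (described in the context) is globally convergent (i.e., from any initialization) to a subset of the set of critical points of $g$; this subset includes all critical points $(W,B,x)$ that are at least partial global minimizers of $g$ with respect to each of $W$, $B$, and $x$, and partial local minimizers of $g$ with respect to $(B,x)$.
   Context: $B=[b_1|\cdots|b_N]\in\mathbb{C}^{n\times N}$; $\|b\|_0$ counts nonzeros. A critical point is a generalized stationary point of $g$ ($0$ in the limiting subdifferential). Partial local minimizer with respect to $(B,x)$ means $g(W,B+\Delta B,x+\Delta x)\ge g(W,B,x)$ for all $\Delta x\in\mathbb{C}^p$ and all $\Delta B$ with $\max_{i,j}|\Delta B_{ij}|<\eta/2$. $H_\eta$ is entrywise hard thresholding: $(H_\eta(\alpha))_i=0$ if $|\alpha_i|<\eta$, $=\alpha_i$ if $|\alpha_i|\ge\eta$. Algorithm A1: for $t=1,2,\dots$, with exact computations: (1) with $X=[P_1x^{t-1}|\cdots|P_Nx^{t-1}]$ and full SVD $X(B^{t-1})^H=U\Sigma V^H$, set $W^t=VU^H$; (2)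 $b_j^t=H_\eta(W^tP_jx^{t-1})$ for all $j$; (3) $x^t$ is a global minimizer of $\nu\|Ax-y\|_2^2+\sum_j\|W^tP_jx-b_j^t\|_2^2$ subject to $\|x\|_2\le C$. *)

theory Defs
  imports "HOL-Analysis.Analysis"
begin

text \<open>Complex matrices are represented as \<open>complex^'c^'r\<close> (r rows, c columns);
  all dimensions are fixed but arbitrary finite index types. The joint variable space
  \<open>complex^'n^'n \<times> complex^'N^'n \<times> complex^'p\<close> is a real Euclidean space
  (complex entries viewed as R^2), with inner product Re of the Hermitian one.\<close>

definition adj :: "complex^'c^'r \<Rightarrow> complex^'r^'c" where
  "adj M = (\<chi> i j. cnj (M$j$i))"

definition col :: "'a^'c^'r \<Rightarrow> 'c \<Rightarrow> 'a^'r" where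
  "col M j = (\<chi> i. M$i$j)"

definition l0 :: "complex^'n \<Rightarrow> nat" where
  "l0 b = card {i. b$i \<noteq> 0}"

definition hard_thr :: "real \<Rightarrow> complex^'n \<Rightarrow> complex^'n" where
  "hard_thr eta a = (\<chi> i. if cmod (a$i) < eta then 0 else a$i)"

definition patch_op :: "complex^'p^'n \<Rightarrow> bool" where
  "patch_op P \<longleftrightarrow> (\<forall>i k. P$i$k = 0 \<or> P$i$k = 1) \<and> (\<forall>i. \<exists>!k. P$i$k = 1)"

definition phi :: "complex^'n^'n \<Rightarrow> ereal" where
  "phi W = (if adj W ** W = mat 1 then 0 else \<infinity>)"

definition chi :: "real \<Rightarrow> complex^'p \<Rightarrow> ereal" where
  "chi C x = (if norm x \<le> C then 0 else \<infinity>)"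

definition gobj :: "real \<Rightarrow> real \<Rightarrow> real \<Rightarrow> complex^'p^'m \<Rightarrow> complex^'m \<Rightarrow>
    ('N \<Rightarrow> complex^'p^'n) \<Rightarrow> complex^'n^'n \<Rightarrow> complex^'N^'n \<Rightarrow> complex^'p \<Rightarrow> ereal" where
  "gobj nu eta C A y P W B x =
     ereal (nu * (norm (A *v x - y))\<^sup>2) + phi W + chi C x
     + ereal (\<Sum>j\<in>UNIV. (norm (W *v (P j *v x) - col B j))\<^sup>2 + eta\<^sup>2 * real (l0 (col B j)))"

definition frechet_subdiff :: "('a::euclidean_space \<Rightarrow> ereal) \<Rightarrow> 'a \<Rightarrow> 'a set" where
  "frechet_subdiff f z = {v. \<bar>f z\<bar> \<noteq> \<infinity> \<and>
     (\<forall>e>0. \<exists>d>0. \<forall>u. norm (u - z) < d \<longrightarrow>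
        f u \<ge> f z + ereal (inner v (u - z) - e * norm (u - z)))}"

definition limiting_subdiff :: "('a::euclidean_space \<Rightarrow> ereal) \<Rightarrow> 'a \<Rightarrow> 'a set" where
  "limiting_subdiff f z = {v. \<bar>f z\<bar> \<noteq> \<infinity> \<and>
     (\<exists>zs vs. zs \<longlonglongrightarrow> z \<and> (\<lambda>k. f (zs k)) \<longlonglongrightarrow> f z \<and>
        (\<forall>k. vs k \<in> frechet_subdiff f (zs k)) \<and> vs \<longlonglongrightarrow> v)}"

definition critical_point :: "('a::euclidean_space \<Rightarrow> ereal) \<Rightarrow> 'a \<Rightarrow> bool" where
  "critical_point f z \<longleftrightarrow> 0 \<in> limiting_subdiff f z"

definition full_svd :: "complex^'n^'n \<Rightarrow> complex^'n^'n \<Rightarrow> complex^'n^'n \<Rightarrow> complex^'n^'n \<Rightarrow> bool" where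
  "full_svd M U S V \<longleftrightarrow> adj U ** U = mat 1 \<and> adj V ** V = mat 1 \<and>
     (\<forall>i j. i \<noteq> j \<longrightarrow> S$i$j = 0) \<and> (\<forall>i. S$i$i \<in> \<real> \<and> Re (S$i$i) \<ge> 0) \<and>
     M = U ** S ** adj V"

definition patch_mat :: "('N \<Rightarrow> complex^'p^'n) \<Rightarrow> complex^'p \<Rightarrow> complex^'N^'n" where
  "patch_mat P x = (\<chi> i j. (P j *v x)$i)"

text \<open>Sequences (Ws, Bs, xs) generated by Algorithm A1 from the arbitrary
  initialization (Ws 0, Bs 0, xs 0); every admissible choice (SVD, minimizer) allowed.\<close>
definition alg_A1 :: "real \<Rightarrow> real \<Rightarrow> real \<Rightarrow> complex^'p^'m \<Rightarrow> complex^'m \<Rightarrow>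
    ('N \<Rightarrow> complex^'p^'n) \<Rightarrow> (nat \<Rightarrow> complex^'n^'n) \<Rightarrow> (nat \<Rightarrow> complex^'N^'n) \<Rightarrow>
    (nat \<Rightarrow> complex^'p) \<Rightarrow> bool" where
  "alg_A1 nu eta C A y P Ws Bs xs \<longleftrightarrow>
    (\<forall>t. (\<exists>U S V. full_svd (patch_mat P (xs t) ** adj (Bs t)) U S V \<and> Ws (Suc t) = V ** adj U)
      \<and> (\<forall>j. col (Bs (Suc t)) j = hard_thr eta (Ws (Suc t) *v (P j *v xs t)))
      \<and> norm (xs (Suc t)) \<le> C
      \<and> (\<forall>x'. norm x' \<le> C \<longrightarrow>
           nu * (norm (A *v xs (Suc t) - y))\<^sup>2
             + (\<Sum>j\<in>UNIV. (norm (Ws (Suc t) *v (P j *v xs (Suc t)) - col (Bs (Suc t)) j))\<^sup>2)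
           \<le> nu * (norm (A *v x' - y))\<^sup>2
             + (\<Sum>j\<in>UNIV. (norm (Ws (Suc t) *v (P j *v x') - col (Bs (Suc t)) j))\<^sup>2)))"

definition good_points :: "real \<Rightarrow> real \<Rightarrow> real \<Rightarrow> complex^'p^'m \<Rightarrow> complex^'m \<Rightarrow>
    ('N \<Rightarrow> complex^'p^'n) \<Rightarrow> ((complex^'n^'n) \<times> (complex^'N^'n) \<times> (complex^'p)) set" where
  "good_points nu eta C A y P =
    {(W, B, x). critical_point (\<lambda>(W', B', x'). gobj nu eta C A y P W' B' x') (W, B, x)
       \<and> (\<forall>W'. gobj nu eta C A y P W B x \<le> gobj nu eta C A y P W' B x)
       \<and> (\<forall>B'. gobj nu eta C A y P W B x \<le> gobj nu eta C A y P W B' x)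
       \<and> (\<forall>x'. gobj nu eta C A y P W B x \<le> gobj nu eta C A y P W B x')
       \<and> (\<forall>dB dx. (\<forall>i j. cmod (dB$i$j) < eta / 2) \<longrightarrow>
             gobj nu eta C A y P W B x \<le> gobj nu eta C A y P W (B + dB) (x + dx))}"

end

theory Submission
  imports Defs
begin

text \<open>Each step of A1 minimises \<open>g\<close> exactly in one block: \<open>W\<close> by the orthogonal Procrustes
  problem (von Neumann's trace inequality), \<open>B\<close> by entrywise hard thresholding, and \<open>x\<close> by a
  convex quadratic over a ball, whose quadratic growth makes \<open>g\<close> drop by at least
  \<open>\<parallel>P\<^sub>j (x\<^sup>t - x\<^sup>t\<^sup>-\<^sup>1)\<parallel>\<^sup>2\<close>. So \<open>g\<close> converges along the bounded iterates and consecutive patches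
  merge. At a limit point, optimality in \<open>B\<close> and \<open>x\<close> survives because the graph of hard
  thresholding is closed, and optimality in \<open>W\<close> because the value of \<open>g\<close> after a W-update is
  squeezed between consecutive values of \<open>g\<close>; the \<open>\<ell>\<^sub>0\<close> term converges as thresholded entries are
  \<open>0\<close> or of modulus at least \<open>\<eta>\<close>. Block optimality, local optimality in \<open>(B, x)\<close> on the
  \<open>\<eta>/2\<close>-box (switching an entry on costs \<open>\<eta>\<^sup>2\<close>) and an \<open>O(r\<^sup>2)\<close> bound on how W-optimality degrades
  when \<open>(B, x)\<close> moves by \<open>r\<close> give a quadratic minorant of \<open>g\<close> at the limit point, so \<open>0\<close> lies in
  its Frechet subdifferential. Since every limit point is good and the iterates are bounded,
  their distance to the good points tends to \<open>0\<close>.\<close>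

section \<open>Unitary matrices and the Procrustes problem\<close>

abbreviation unitary :: "complex^'n^'n \<Rightarrow> bool" where
  "unitary U \<equiv> adj U ** U = mat 1"

lemma adj_adj [simp]: "adj (adj M) = M"
  by (simp add: adj_def vec_eq_iff)

lemma adj_matrix_mult: "adj (M ** N) = adj N ** adj M"
  by (simp add: adj_def matrix_matrix_mult_def vec_eq_iff mult.commute)

lemma unitary_right_inverse: "unitary U \<Longrightarrow> U ** adj U = mat 1"
  using matrix_left_right_inverse by blast

lemma unitary_adj: "unitary U \<Longrightarrow> unitary (adj U)"
  using unitary_right_inverse by fastforce

lemma unitary_mult:
  assumes "unitary U" "unitary V" shows "unitary (U ** V)"
proof -
  have "adj (U ** V) ** (U ** V) = adj V ** ((adj U ** U) ** V)"
    by (simp add: adj_matrix_mult matrix_mul_assoc)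
  with assms show ?thesis by simp
qed

lemma inner_vec_complex: "inner a b = Re (\<Sum>i\<in>UNIV. a$i * cnj (b$i))"
  by (simp add: inner_vec_def inner_complex_def)

lemma inner_matrix_vector_mult_adj: "inner (M *v a) b = inner a (adj M *v b)"
proof -
  have "(\<Sum>i\<in>UNIV. (M *v a)$i * cnj (b$i)) = (\<Sum>i\<in>UNIV. \<Sum>k\<in>UNIV. M$i$k * a$k * cnj (b$i))"
    by (simp add: matrix_vector_mult_def sum_distrib_right)
  also have "\<dots> = (\<Sum>k\<in>UNIV. \<Sum>i\<in>UNIV. M$i$k * a$k * cnj (b$i))"
    by (rule sum.swap)
  also have "\<dots> = (\<Sum>k\<in>UNIV. a$k * cnj ((adj M *v b)$k))"
    by (simp add: matrix_vector_mult_def adj_def sum_distrib_left mult_ac)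
  finally show ?thesis by (simp add: inner_vec_complex)
qed

lemma norm_unitary_mult:
  assumes "unitary U" shows "norm (U *v a) = norm a"
proof -
  have "inner (U *v a) (U *v a) = inner a a"
    by (simp add: inner_matrix_vector_mult_adj matrix_vector_mul_assoc assms)
  thus ?thesis by (simp add: norm_eq_sqrt_inner)
qed

lemma col_add: "col (B + D) j = col B j + col D j"
  and col_diff: "col (B - D) j = col B j - col D j"
  and col_scaleR: "col (c *\<^sub>R D) j = c *\<^sub>R col D j"
  and col_zero [simp]: "col 0 j = 0"
  by (simp_all add: col_def vec_eq_iff)

lemma power2_norm_vec: "(norm (v::'a::real_normed_vector^'n))\<^sup>2 = (\<Sum>i\<in>UNIV. (norm (v$i))\<^sup>2)"
  by (simp add: norm_vec_def L2_set_def sum_nonneg)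

lemma power2_norm_matrix_eq_sum_col: "(norm M)\<^sup>2 = (\<Sum>k\<in>UNIV. (norm (col M k))\<^sup>2)"
proof -
  have "(norm M)\<^sup>2 = (\<Sum>i\<in>UNIV. \<Sum>k\<in>UNIV. (norm (M$i$k))\<^sup>2)"
    by (simp add: power2_norm_vec)
  also have "\<dots> = (\<Sum>k\<in>UNIV. \<Sum>i\<in>UNIV. (norm (M$i$k))\<^sup>2)"
    by (rule sum.swap)
  finally show ?thesis by (simp add: power2_norm_vec col_def)
qed

lemma norm_col_le: "norm (col M k) \<le> norm M"
proof (rule power2_le_imp_le)
  show "(norm (col M k))\<^sup>2 \<le> (norm M)\<^sup>2"
    unfolding power2_norm_matrix_eq_sum_col by (rule member_le_sum) auto
qed simp

lemma norm_matrix_entry_le: "norm (M$i$k) \<le> norm M"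
  using Finite_Cartesian_Product.norm_nth_le[of "col M k" i] norm_col_le[of M k] by (simp add: col_def)

lemma norm_matrix_vector_mult_le: "norm (M *v (v::complex^'c)) \<le> norm M * norm v"
proof -
  have row: "norm ((M *v v)$i) \<le> norm (M$i) * norm v" for i
  proof -
    have "norm ((M *v v)$i) \<le> (\<Sum>k\<in>UNIV. norm (M$i$k) * norm (v$k))"
      unfolding matrix_vector_mult_def vec_lambda_beta norm_mult[symmetric] by (rule norm_sum)
    also have "\<dots> \<le> L2_set (\<lambda>k. norm (M$i$k)) UNIV * L2_set (\<lambda>k. norm (v$k)) UNIV"
      using L2_set_mult_ineq[of "\<lambda>k. norm (M$i$k)" "\<lambda>k. norm (v$k)" UNIV] by simp
    finally show ?thesis by (simp add: norm_vec_def)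
  qed
  have "(norm (M *v v))\<^sup>2 \<le> (\<Sum>i\<in>UNIV. (norm (M$i) * norm v)\<^sup>2)"
    unfolding power2_norm_vec[of "M *v v"] by (intro sum_mono power_mono row) simp
  also have "\<dots> = (norm M * norm v)\<^sup>2"
    by (simp add: power_mult_distrib sum_distrib_right power2_norm_vec[of M])
  finally show ?thesis by (rule power2_le_imp_le) simp
qed

lemma norm_col_unitary:
  assumes "unitary U" shows "norm (col U k) = 1"
proof -
  have "(adj U ** U)$k$k = 1" using assms by (simp add: mat_def)
  hence "Re (\<Sum>i\<in>UNIV. cnj (U$i$k) * U$i$k) = 1"
    by (simp add: matrix_matrix_mult_def adj_def)
  moreover have "Re (cnj z * z) = (cmod z)\<^sup>2" for z
    by (metis Re_complex_of_real complex_norm_square mult.commute)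
  ultimately have "(\<Sum>i\<in>UNIV. (norm (U$i$k))\<^sup>2) = 1"
    by simp
  hence "(norm (col U k))\<^sup>2 = 1" by (simp add: power2_norm_vec col_def)
  thus ?thesis by (metis norm_ge_zero power2_eq_1_iff neg_0_le_iff_le not_one_le_zero)
qed

lemma norm_unitary:
  assumes "unitary (U::complex^'n^'n)" shows "norm U = sqrt (real CARD('n))"
proof -
  have "(norm U)\<^sup>2 = real CARD('n)"
    by (simp add: power2_norm_matrix_eq_sum_col norm_col_unitary[OF assms])
  thus ?thesis by (metis norm_ge_zero real_sqrt_unique)
qed

lemma trace_mult_diagonal:
  assumes "\<forall>i j. i \<noteq> j \<longrightarrow> S$i$j = 0"
  shows "trace (Q ** S) = (\<Sum>i\<in>UNIV. Q$i$i * S$i$i)"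
proof -
  have "(\<Sum>k\<in>UNIV. Q$i$k * S$k$i) = (\<Sum>k\<in>UNIV. if k = i then Q$i$i * S$i$i else 0)" for i
    by (rule sum.cong) (use assms in auto)
  thus ?thesis by (simp add: trace_def matrix_matrix_mult_def)
qed

text \<open>Von Neumann's trace inequality for \<open>M = U \<Sigma> V\<^sup>H\<close>: with the unitary \<open>Q = V\<^sup>H W U\<close>, whose
  entries have modulus at most 1, \<open>Re (trace (W M)) = \<Sum>\<^sub>i Re (Q\<^sub>i\<^sub>i) \<sigma>\<^sub>i \<le> \<Sum>\<^sub>i \<sigma>\<^sub>i\<close>, with equality for \<open>W = V U\<^sup>H\<close>.\<close>
lemma procrustes_trace_le:
  assumes svd: "full_svd M U S V" and W: "unitary W"
  shows "Re (trace (W ** M)) \<le> Re (trace ((V ** adj U) ** M))"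
proof -
  from svd have U: "unitary U" and V: "unitary V"
    and diag: "\<forall>i j. i \<noteq> j \<longrightarrow> S$i$j = 0" and sing: "\<forall>i. S$i$i \<in> \<real> \<and> Re (S$i$i) \<ge> 0"
    and M: "M = U ** S ** adj V" by (auto simp: full_svd_def)
  have trace_eq: "trace (X ** M) = (\<Sum>i\<in>UNIV. (adj V ** X ** U)$i$i * S$i$i)" for X
  proof -
    have "trace (X ** M) = trace ((X ** U ** S) ** adj V)" by (simp add: M matrix_mul_assoc)
    also have "\<dots> = trace (adj V ** (X ** U ** S))" by (rule trace_mul_sym)
    also have "\<dots> = trace ((adj V ** X ** U) ** S)" by (simp add: matrix_mul_assoc)
    also have "\<dots> = (\<Sum>i\<in>UNIV. (adj V ** X ** U)$i$i * S$i$i)"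
      by (rule trace_mult_diagonal[OF diag])
    finally show ?thesis .
  qed
  define Q where "Q = adj V ** W ** U"
  have Q: "unitary Q" unfolding Q_def by (intro unitary_mult unitary_adj V W U)
  have "Re (trace (W ** M)) = (\<Sum>i\<in>UNIV. Re (Q$i$i * S$i$i))"
    by (simp add: trace_eq Q_def)
  also have "\<dots> \<le> (\<Sum>i\<in>UNIV. Re (S$i$i))"
  proof (rule sum_mono)
    fix i
    obtain s where s: "S$i$i = of_real s" "s \<ge> 0"
      using sing by (metis Reals_cases Re_complex_of_real)
    have "Re (Q$i$i) \<le> cmod (Q$i$i)" by (rule complex_Re_le_cmod)
    also have "\<dots> \<le> norm (col Q i)"
      using Finite_Cartesian_Product.norm_nth_le[of "col Q i" i] by (simp add: col_def)
    also have "\<dots> = 1" by (rule norm_col_unitary[OF Q])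
    finally have "Re (Q$i$i) * s \<le> 1 * s" using s(2) by (rule mult_right_mono)
    thus "Re (Q$i$i * S$i$i) \<le> Re (S$i$i)" by (simp add: s)
  qed
  also have "\<dots> = Re (trace ((V ** adj U) ** M))"
  proof -
    have "adj V ** (V ** adj U) ** U = mat 1"
      by (metis V U unitary_right_inverse matrix_mul_assoc matrix_mul_lid)
    thus ?thesis by (simp add: trace_eq mat_def)
  qed
  finally show ?thesis .
qed

section \<open>The data-fit term\<close>

definition fit :: "real \<Rightarrow> complex^'p^'m \<Rightarrow> complex^'m \<Rightarrow> ('N::finite \<Rightarrow> complex^'p^'n) \<Rightarrow>
    complex^'n^'n \<Rightarrow> complex^'N^'n \<Rightarrow> complex^'p \<Rightarrow> real" where
  "fit nu A y P W B x = nu * (norm (A *v x - y))\<^sup>2 + (\<Sum>j\<in>UNIV. (norm (W *v (P j *v x) - col B j))\<^sup>2)"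

definition nnz :: "complex^'N^'n \<Rightarrow> real" where
  "nnz B = (\<Sum>j\<in>UNIV. real (l0 (col B j)))"

lemma gobj_eq_fit:
  "gobj nu eta C A y P W B x =
    (if unitary W \<and> norm x \<le> C then ereal (fit nu A y P W B x + eta\<^sup>2 * nnz B) else \<infinity>)"
proof -
  have "(\<Sum>j\<in>UNIV. (norm (W *v (P j *v x) - col B j))\<^sup>2 + eta\<^sup>2 * real (l0 (col B j)))
     = (\<Sum>j\<in>UNIV. (norm (W *v (P j *v x) - col B j))\<^sup>2) + eta\<^sup>2 * nnz B"
    by (simp add: sum.distrib sum_distrib_left nnz_def)
  thus ?thesis by (simp add: gobj_def phi_def chi_def fit_def)
qed

lemma fit_nonneg: "nu \<ge> 0 \<Longrightarrow> 0 \<le> fit nu A y P W B x"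
  by (simp add: fit_def sum_nonneg)

definition coupling :: "('N::finite \<Rightarrow> complex^'p^'n) \<Rightarrow> complex^'n^'n \<Rightarrow> complex^'p \<Rightarrow>
    complex^'N^'n \<Rightarrow> real" where
  "coupling P M x B = (\<Sum>j\<in>UNIV. inner (M *v (P j *v x)) (col B j))"

lemma power2_norm_diff: "(norm (a - b))\<^sup>2 = (norm a)\<^sup>2 + (norm b)\<^sup>2 - 2 * inner a b"
  by (simp add: power2_norm_eq_inner inner_diff_left inner_diff_right inner_commute)

lemma power2_norm_add: "(norm (a + b))\<^sup>2 = (norm a)\<^sup>2 + (norm b)\<^sup>2 + 2 * inner a b"
  by (simp add: power2_norm_eq_inner inner_add_left inner_add_right inner_commute)

lemma fit_unitary:
  assumes "unitary W"
  shows "fit nu A y P W B x = nu * (norm (A *v x - y))\<^sup>2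
    + (\<Sum>j\<in>UNIV. (norm (P j *v x))\<^sup>2 + (norm (col B j))\<^sup>2) - 2 * coupling P W x B"
  by (simp add: fit_def coupling_def power2_norm_diff norm_unitary_mult[OF assms]
      sum_subtractf sum_distrib_left)

lemma coupling_diff: "coupling P (M - M') x B = coupling P M x B - coupling P M' x B"
  by (simp add: coupling_def matrix_vector_mult_diff_rdistrib inner_diff_left sum_subtractf)

lemma coupling_eq_trace: "coupling P M x B = Re (trace (M ** (patch_mat P x ** adj B)))"
proof -
  have "trace (M ** (patch_mat P x ** adj B)) = trace ((M ** patch_mat P x) ** adj B)"
    by (simp add: matrix_mul_assoc)
  also have "\<dots> = (\<Sum>i\<in>UNIV. \<Sum>j\<in>UNIV. (M ** patch_mat P x)$i$j * cnj (B$i$j))"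
    by (simp add: trace_def matrix_matrix_mult_def adj_def)
  also have "\<dots> = (\<Sum>j\<in>UNIV. \<Sum>i\<in>UNIV. (M ** patch_mat P x)$i$j * cnj (B$i$j))"
    by (rule sum.swap)
  finally show ?thesis
    by (simp add: coupling_def inner_vec_complex col_def matrix_matrix_mult_def
        matrix_vector_mult_def patch_mat_def)
qed

lemma full_svd_unitary: "full_svd M U S V \<Longrightarrow> unitary (V ** adj U)"
  by (auto simp: full_svd_def intro!: unitary_mult unitary_adj)

lemma procrustes_fit_le:
  assumes "full_svd (patch_mat P x ** adj B) U S V" and "unitary W"
  shows "fit nu A y P (V ** adj U) B x \<le> fit nu A y P W B x"
  using procrustes_trace_le[OF assms]
  by (simp add: fit_unitary[OF assms(2)] fit_unitary[OF full_svd_unitary[OF assms(1)]]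
      coupling_eq_trace)

definition fit_deriv :: "real \<Rightarrow> complex^'p^'m \<Rightarrow> complex^'m \<Rightarrow> ('N::finite \<Rightarrow> complex^'p^'n) \<Rightarrow>
    complex^'n^'n \<Rightarrow> complex^'N^'n \<Rightarrow> complex^'p \<Rightarrow> complex^'N^'n \<Rightarrow> complex^'p \<Rightarrow> real" where
  "fit_deriv nu A y P W B x dB dx = 2 * nu * inner (A *v x - y) (A *v dx)
     + (\<Sum>j\<in>UNIV. 2 * inner (W *v (P j *v x) - col B j) (W *v (P j *v dx) - col dB j))"

definition fit_quad :: "real \<Rightarrow> complex^'p^'m \<Rightarrow> ('N::finite \<Rightarrow> complex^'p^'n) \<Rightarrow>
    complex^'n^'n \<Rightarrow> complex^'N^'n \<Rightarrow> complex^'p \<Rightarrow> real" where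
  "fit_quad nu A P W dB dx = nu * (norm (A *v dx))\<^sup>2
     + (\<Sum>j\<in>UNIV. (norm (W *v (P j *v dx) - col dB j))\<^sup>2)"

lemma fit_add:
  "fit nu A y P W (B + dB) (x + dx)
    = fit nu A y P W B x + fit_deriv nu A y P W B x dB dx + fit_quad nu A P W dB dx"
proof -
  have data: "A *v (x + dx) - y = (A *v x - y) + A *v dx"
    by (simp add: matrix_vector_right_distrib)
  have patches: "W *v (P j *v (x + dx)) - col (B + dB) j
      = (W *v (P j *v x) - col B j) + (W *v (P j *v dx) - col dB j)" for j
    by (simp add: matrix_vector_right_distrib col_add)
  show ?thesis
    unfolding fit_def fit_deriv_def fit_quad_def data patches power2_norm_add
    by (simp add: sum.distrib distrib_left)
qed

lemma matrix_vector_mult_scaleR: "(M::complex^'c^'r) *v (c *\<^sub>R v) = c *\<^sub>R (M *v v)"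
  using linear_iff matrix_vector_mul_linear by blast

lemma fit_deriv_scaleR:
  "fit_deriv nu A y P W B x (c *\<^sub>R dB) (c *\<^sub>R dx) = c * fit_deriv nu A y P W B x dB dx"
  by (simp add: fit_deriv_def matrix_vector_mult_scaleR col_scaleR scaleR_diff_right[symmetric]
      sum_distrib_left distrib_left mult_ac)

lemma fit_quad_scaleR:
  "fit_quad nu A P W (c *\<^sub>R dB) (c *\<^sub>R dx) = c\<^sup>2 * fit_quad nu A P W dB dx"
  by (simp add: fit_quad_def matrix_vector_mult_scaleR col_scaleR scaleR_diff_right[symmetric]
      sum_distrib_left distrib_left power_mult_distrib mult_ac)

lemma fit_quad_nonneg: "nu \<ge> 0 \<Longrightarrow> 0 \<le> fit_quad nu A P W dB dx"
  by (simp add: fit_quad_def sum_nonneg)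

lemma fit_deriv_split:
  "fit_deriv nu A y P W B x dB dx = fit_deriv nu A y P W B x 0 dx
     - (\<Sum>j\<in>UNIV. 2 * inner (W *v (P j *v x) - col B j) (col dB j))"
  by (simp add: fit_deriv_def inner_diff_right sum_subtractf sum.distrib right_diff_distrib)

lemma nonneg_of_quadratic_nonneg:
  fixes l q :: real
  assumes "\<And>s. 0 < s \<Longrightarrow> s \<le> 1 \<Longrightarrow> 0 \<le> s * l + s\<^sup>2 * q"
  shows "0 \<le> l"
proof (rule tendsto_lowerbound)
  show "((\<lambda>s. l + s * q) \<longlongrightarrow> l) (at_right 0)"
    by (auto intro!: tendsto_eq_intros)
  have "0 \<le> l + s * q" if "0 < s" "s < 1" for s
  proof -
    have "0 \<le> s * (l + s * q)"
      using assms[of s] that by (simp add: power2_eq_square algebra_simps)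
    thus ?thesis using that by (simp add: zero_le_mult_iff)
  qed
  thus "\<forall>\<^sub>F s in at_right 0. 0 \<le> l + s * q"
    by (intro eventually_at_rightI[of 0 1]) auto
qed simp

lemma fit_min_cball_deriv_nonneg:
  assumes min: "\<forall>x'. norm x' \<le> C \<longrightarrow> fit nu A y P W B x \<le> fit nu A y P W B x'"
    and "norm x \<le> C" "norm z \<le> C"
  shows "0 \<le> fit_deriv nu A y P W B x 0 (z - x)"
proof (rule nonneg_of_quadratic_nonneg)
  fix s :: real assume s: "0 < s" "s \<le> 1"
  have "x + s *\<^sub>R (z - x) \<in> cball 0 C"
    using convexD_alt[OF convex_cball[of 0 C], of x z s] assms(2,3) s
    by (simp add: algebra_simps)
  hence "fit nu A y P W B x \<le> fit nu A y P W (B + s *\<^sub>R 0) (x + s *\<^sub>R (z - x))"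
    using min by simp
  thus "0 \<le> s * fit_deriv nu A y P W B x 0 (z - x) + s\<^sup>2 * fit_quad nu A P W 0 (z - x)"
    by (simp only: fit_add fit_deriv_scaleR fit_quad_scaleR)
qed

lemma fit_min_cball_growth:
  assumes "\<forall>x'. norm x' \<le> C \<longrightarrow> fit nu A y P W B x \<le> fit nu A y P W B x'"
    and "norm x \<le> C" "norm z \<le> C"
  shows "fit nu A y P W B x + fit_quad nu A P W 0 (z - x) \<le> fit nu A y P W B z"
  using fit_add[of nu A y P W B 0 x "z - x"] fit_min_cball_deriv_nonneg[OF assms] by simp

section \<open>Hard thresholding\<close>

text \<open>The closed graph of hard thresholding: at a tie \<open>|a| = \<eta>\<close> both outputs are admitted, so
  that the relation survives passage to the limit.\<close>
definition thr_rel :: "real \<Rightarrow> complex \<Rightarrow> complex \<Rightarrow> bool" where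
  "thr_rel eta a c \<longleftrightarrow> (c = 0 \<and> cmod a \<le> eta) \<or> (c = a \<and> eta \<le> cmod a)"

lemma thr_rel_hard_thr: "thr_rel eta (a$i) (hard_thr eta a $ i)"
  by (simp add: thr_rel_def hard_thr_def)

lemma thr_rel_norm_le: "thr_rel eta a c \<Longrightarrow> cmod c \<le> cmod a"
  by (auto simp: thr_rel_def)

lemma thr_rel_entry_min:
  assumes "eta > 0" "thr_rel eta a c"
  shows "(cmod (a - c))\<^sup>2 + eta\<^sup>2 * (if c \<noteq> 0 then 1 else 0)
    \<le> (cmod (a - b))\<^sup>2 + eta\<^sup>2 * (if b \<noteq> 0 then 1 else 0)"
proof (cases "c = 0 \<and> cmod a \<le> eta")
  case True
  hence "(cmod a)\<^sup>2 \<le> eta\<^sup>2" using assms(1) by (simp add: power_mono)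
  with True show ?thesis by (cases "b = 0") (auto simp: add_increasing)
next
  case False
  hence c: "c = a" "eta \<le> cmod a" using assms(2) by (auto simp: thr_rel_def)
  hence "eta\<^sup>2 \<le> (cmod a)\<^sup>2" "a \<noteq> 0" using assms(1) by (auto simp: power_mono)
  with c show ?thesis by (cases "b = 0") auto
qed

lemma l0_eq_sum: "real (l0 b) = (\<Sum>i\<in>UNIV. (if b$i \<noteq> 0 then 1 else 0))"
proof -
  have "(\<Sum>i\<in>UNIV. (if b$i \<noteq> 0 then 1 else 0::real)) = (\<Sum>i\<in>{i\<in>UNIV. b$i \<noteq> 0}. 1)"
    by (rule sum.inter_filter[symmetric]) simp
  thus ?thesis by (simp add: l0_def)
qed

lemma thr_rel_vec_min:
  assumes "eta > 0" "\<forall>i. thr_rel eta (a$i) (c$i)"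
  shows "(norm (a - c))\<^sup>2 + eta\<^sup>2 * real (l0 c) \<le> (norm (a - b))\<^sup>2 + eta\<^sup>2 * real (l0 b)"
proof -
  have expand: "(norm (a - v))\<^sup>2 + eta\<^sup>2 * real (l0 v)
      = (\<Sum>i\<in>UNIV. (cmod (a$i - v$i))\<^sup>2 + eta\<^sup>2 * (if v$i \<noteq> 0 then 1 else 0))" for v
    by (simp add: power2_norm_vec l0_eq_sum sum.distrib sum_distrib_left)
  show ?thesis
    unfolding expand by (intro sum_mono thr_rel_entry_min) (use assms in auto)
qed

text \<open>Entries of a thresholded vector are either \<open>0\<close> or of modulus at least \<open>\<eta>\<close>, so a
  perturbation of size below \<open>\<eta>/2\<close> cannot switch them off, and switching an entry on costs
  \<open>\<eta>\<^sup>2\<close>, more than the first-order gain \<open>2|a||d| < \<eta>\<^sup>2\<close>.\<close>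
lemma thr_rel_entry_local_min:
  assumes "eta > 0" "thr_rel eta a b" "cmod d < eta / 2"
  shows "0 \<le> - 2 * inner (a - b) d
    + eta\<^sup>2 * ((if b + d \<noteq> 0 then 1 else 0) - (if b \<noteq> 0 then 1 else 0))"
proof (cases "b = 0 \<and> cmod a \<le> eta")
  case True
  have "inner a d \<le> cmod a * cmod d" by (rule norm_cauchy_schwarz)
  also have "\<dots> \<le> eta * (eta / 2)" using True assms by (intro mult_mono) auto
  finally have "2 * inner a d \<le> eta\<^sup>2" by (simp add: power2_eq_square)
  with True show ?thesis by (cases "d = 0") auto
next
  case False
  hence b: "b = a" "eta \<le> cmod a" using assms(2) by (auto simp: thr_rel_def)
  have "cmod b - cmod d \<le> cmod (b + d)"
    by (metis norm_diff_ineq)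
  hence "b + d \<noteq> 0" "b \<noteq> 0" using b assms by auto
  with b show ?thesis by simp
qed

definition thresholded :: "real \<Rightarrow> ('N::finite \<Rightarrow> complex^'p^'n) \<Rightarrow> complex^'n^'n \<Rightarrow>
    complex^'N^'n \<Rightarrow> complex^'p \<Rightarrow> bool" where
  "thresholded eta P W B x \<longleftrightarrow> (\<forall>i j. thr_rel eta ((W *v (P j *v x))$i) (B$i$j))"

lemma nnz_eq_sum: "nnz B = (\<Sum>j\<in>UNIV. \<Sum>i\<in>UNIV. (if B$i$j \<noteq> 0 then 1 else 0))"
  by (simp add: nnz_def l0_eq_sum col_def)

lemma thresholded_min:
  assumes "eta > 0" "thresholded eta P W B x"
  shows "fit nu A y P W B x + eta\<^sup>2 * nnz B \<le> fit nu A y P W B' x + eta\<^sup>2 * nnz B'"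
proof -
  have "(\<Sum>j\<in>UNIV. (norm (W *v (P j *v x) - col B j))\<^sup>2 + eta\<^sup>2 * real (l0 (col B j)))
     \<le> (\<Sum>j\<in>UNIV. (norm (W *v (P j *v x) - col B' j))\<^sup>2 + eta\<^sup>2 * real (l0 (col B' j)))"
    by (intro sum_mono thr_rel_vec_min) (use assms in \<open>auto simp: thresholded_def col_def\<close>)
  thus ?thesis by (simp add: fit_def nnz_def sum.distrib sum_distrib_left)
qed

lemma thresholded_local_min:
  assumes eta: "eta > 0" and nu: "nu \<ge> 0" and thr: "thresholded eta P W B x"
    and min: "\<forall>x'. norm x' \<le> C \<longrightarrow> fit nu A y P W B x \<le> fit nu A y P W B x'"
    and "norm x \<le> C" "norm (x + dx) \<le> C"
    and dB: "\<forall>i j. cmod (dB$i$j) < eta / 2"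
  shows "fit nu A y P W B x + eta\<^sup>2 * nnz B
    \<le> fit nu A y P W (B + dB) (x + dx) + eta\<^sup>2 * nnz (B + dB)"
proof -
  have "0 \<le> fit_deriv nu A y P W B x 0 dx"
    using fit_min_cball_deriv_nonneg[OF min assms(5,6)] by simp
  moreover have "(\<Sum>j\<in>UNIV. 2 * inner (W *v (P j *v x) - col B j) (col dB j))
      \<le> eta\<^sup>2 * nnz (B + dB) - eta\<^sup>2 * nnz B"
  proof -
    have "eta\<^sup>2 * nnz (B + dB) - eta\<^sup>2 * nnz B
        - (\<Sum>j\<in>UNIV. 2 * inner (W *v (P j *v x) - col B j) (col dB j))
      = (\<Sum>j\<in>UNIV. \<Sum>i\<in>UNIV. - 2 * inner ((W *v (P j *v x))$i - B$i$j) (dB$i$j)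
          + eta\<^sup>2 * ((if B$i$j + dB$i$j \<noteq> 0 then 1 else 0) - (if B$i$j \<noteq> 0 then 1 else 0)))"
      by (simp add: nnz_eq_sum inner_vec_def col_def sum.distrib sum_distrib_left sum_subtractf
          sum_negf right_diff_distrib)
    also have "\<dots> \<ge> 0"
      by (intro sum_nonneg thr_rel_entry_local_min)
         (use eta thr dB in \<open>auto simp: thresholded_def\<close>)
    finally show ?thesis by simp
  qed
  moreover have "0 \<le> fit_quad nu A P W dB dx" using nu by (rule fit_quad_nonneg)
  ultimately show ?thesis
    using fit_add[of nu A y P W B dB x dx] fit_deriv_split[of nu A y P W B x dB dx] by linarith
qed

section \<open>Critical points of the objective\<close>

lemma inner_patch_perturbation:
  fixes M :: "complex^'n^'n" and Q :: "complex^'p^'n"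
  assumes M: "norm M \<le> r" and x: "norm (x' - x) \<le> r" and b: "norm (b' - b) \<le> r" and "r \<le> 1"
  shows "inner (M *v (Q *v x)) b - r\<^sup>2 * (norm Q * (norm b + 1) + norm (Q *v x))
    \<le> inner (M *v (Q *v x')) b'"
proof -
  have r: "0 \<le> r" using M norm_ge_zero order_trans by blast
  have "norm b' \<le> norm b + 1"
    using norm_triangle_ineq[of b "b' - b"] b \<open>r \<le> 1\<close> by simp
  have "\<bar>inner (M *v (Q *v (x' - x))) b'\<bar> \<le> norm M * (norm Q * norm (x' - x)) * norm b'"
    using Cauchy_Schwarz_ineq2 norm_matrix_vector_mult_le[of M] norm_matrix_vector_mult_le[of Q]
    by (meson mult_left_mono mult_right_mono norm_ge_zero order_trans)
  also have "\<dots> \<le> r * (norm Q * r) * (norm b + 1)"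
    using M x r \<open>norm b' \<le> norm b + 1\<close> by (intro mult_mono) auto
  finally have first: "\<bar>inner (M *v (Q *v (x' - x))) b'\<bar> \<le> r\<^sup>2 * (norm Q * (norm b + 1))"
    by (simp add: power2_eq_square mult_ac)
  have "\<bar>inner (M *v (Q *v x)) (b' - b)\<bar> \<le> norm M * norm (Q *v x) * norm (b' - b)"
    using Cauchy_Schwarz_ineq2 norm_matrix_vector_mult_le[of M]
    by (meson mult_right_mono norm_ge_zero order_trans)
  also have "\<dots> \<le> r * norm (Q *v x) * r"
    using M b r by (intro mult_mono) auto
  finally have second: "\<bar>inner (M *v (Q *v x)) (b' - b)\<bar> \<le> r\<^sup>2 * norm (Q *v x)"
    by (simp add: power2_eq_square mult_ac)
  have "inner (M *v (Q *v x')) b' - inner (M *v (Q *v x)) b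
      = inner (M *v (Q *v (x' - x))) b' + inner (M *v (Q *v x)) (b' - b)"
    by (simp add: matrix_vector_mult_diff_distrib inner_diff_left inner_diff_right)
  with first second show ?thesis by (simp add: algebra_simps)
qed

lemma coupling_perturbation:
  assumes "norm M \<le> r" "norm (x' - x) \<le> r" "norm (B' - B) \<le> r" "r \<le> 1"
  shows "coupling P M x B - r\<^sup>2 * (\<Sum>j\<in>UNIV. norm (P j) * (norm (col B j) + 1) + norm (P j *v x))
    \<le> coupling P M x' B'"
proof -
  have "norm (col B' j - col B j) \<le> r" for j
    using norm_col_le[of "B' - B" j] assms(3) by (simp add: col_diff)
  hence "inner (M *v (P j *v x)) (col B j)
      - r\<^sup>2 * (norm (P j) * (norm (col B j) + 1) + norm (P j *v x))
      \<le> inner (M *v (P j *v x')) (col B' j)" for j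
    using assms by (intro inner_patch_perturbation) auto
  hence "(\<Sum>j\<in>UNIV. inner (M *v (P j *v x)) (col B j)
      - r\<^sup>2 * (norm (P j) * (norm (col B j) + 1) + norm (P j *v x)))
      \<le> coupling P M x' B'"
    unfolding coupling_def by (rule sum_mono)
  thus ?thesis by (simp add: coupling_def sum_subtractf sum_distrib_left)
qed

text \<open>A unitary minimiser of \<open>fit\<close> in \<open>W\<close> stays a minimiser up to second order when \<open>B\<close> and \<open>x\<close>
  move: the difference of fits of two unitaries is twice a coupling term, which is nonnegative at
  \<open>(B, x)\<close> and changes by \<open>O(r\<^sup>2)\<close> since \<open>W' - W\<close> is itself of size \<open>r\<close>.\<close>
lemma fit_W_min_perturbation:
  assumes W: "unitary W" and W': "unitary W'"
    and min: "\<forall>W''. unitary W'' \<longrightarrow> fit nu A y P W B x \<le> fit nu A y P W'' B x"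
    and "norm (W' - W) \<le> r" "norm (x' - x) \<le> r" "norm (B' - B) \<le> r" "r \<le> 1"
  shows "fit nu A y P W B' x'
      - r\<^sup>2 * (2 * (\<Sum>j\<in>UNIV. norm (P j) * (norm (col B j) + 1) + norm (P j *v x)))
    \<le> fit nu A y P W' B' x'"
proof -
  have diff: "fit nu A y P W' B'' x'' - fit nu A y P W B'' x'' = 2 * coupling P (W - W') x'' B''"
    for B'' x'' by (simp add: fit_unitary[OF W] fit_unitary[OF W'] coupling_diff)
  have "fit nu A y P W B x \<le> fit nu A y P W' B x" using min W' by blast
  hence "0 \<le> coupling P (W - W') x B" using diff[of B x] by simp
  moreover have "norm (W - W') \<le> r" using assms(4) by (simp add: norm_minus_commute)
  ultimately show ?thesis
    using coupling_perturbation[of "W - W'" r x' x B' B P] assms(5-7) diff[of B' x']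
    by (simp add: algebra_simps)
qed

lemma frechet_subdiff_subset_limiting: "v \<in> frechet_subdiff f z \<Longrightarrow> v \<in> limiting_subdiff f z"
  unfolding limiting_subdiff_def
  by (intro CollectI conjI exI[of _ "\<lambda>_. z"] exI[of _ "\<lambda>_. v"]) (auto simp: frechet_subdiff_def)

lemma zero_frechet_subdiff_of_quadratic_minorant:
  fixes f :: "'a::euclidean_space \<Rightarrow> ereal"
  assumes fin: "\<bar>f z\<bar> \<noteq> \<infinity>" and "d > 0" "K \<ge> 0"
    and minorant: "\<forall>u. norm (u - z) < d \<longrightarrow> f z - ereal (K * (norm (u - z))\<^sup>2) \<le> f u"
  shows "0 \<in> frechet_subdiff f z"
  unfolding frechet_subdiff_def
proof (intro CollectI conjI allI impI fin)
  fix e :: real assume "e > 0"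
  obtain c where c: "f z = ereal c" using fin by (cases "f z") auto
  show "\<exists>d'>0. \<forall>u. norm (u - z) < d' \<longrightarrow> f z + ereal (inner 0 (u - z) - e * norm (u - z)) \<le> f u"
  proof (intro exI[of _ "min d (e / (K + 1))"] conjI allI impI)
    show "min d (e / (K + 1)) > 0" using \<open>d > 0\<close> \<open>e > 0\<close> \<open>K \<ge> 0\<close> by simp
    fix u assume u: "norm (u - z) < min d (e / (K + 1))"
    have "K * norm (u - z) \<le> e"
    proof -
      have "K * norm (u - z) \<le> K * (e / (K + 1))"
        using u \<open>K \<ge> 0\<close> by (intro mult_left_mono) auto
      also have "\<dots> \<le> e" using \<open>e > 0\<close> \<open>K \<ge> 0\<close> by (simp add: field_simps)
      finally show ?thesis .
    qed
    hence "K * (norm (u - z))\<^sup>2 \<le> e * norm (u - z)"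
      by (simp add: power2_eq_square mult_right_mono mult.assoc[symmetric])
    hence "f z + ereal (inner 0 (u - z) - e * norm (u - z)) \<le> f z - ereal (K * (norm (u - z))\<^sup>2)"
      by (simp add: c)
    also have "\<dots> \<le> f u" using minorant u by simp
    finally show "f z + ereal (inner 0 (u - z) - e * norm (u - z)) \<le> f u" .
  qed
qed

lemma gobj_local_min:
  assumes eta: "eta > 0" and nu: "nu \<ge> 0" and W: "unitary W" and x: "norm x \<le> C"
    and thr: "thresholded eta P W B x"
    and x_min: "\<forall>x'. norm x' \<le> C \<longrightarrow> fit nu A y P W B x \<le> fit nu A y P W B x'"
    and dB: "\<forall>i j. cmod (dB$i$j) < eta / 2"
  shows "gobj nu eta C A y P W B x \<le> gobj nu eta C A y P W (B + dB) (x + dx)"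
  using thresholded_local_min[OF eta nu thr x_min x _ dB, of dx]
  by (cases "norm (x + dx) \<le> C") (simp_all add: gobj_eq_fit W x)

lemma gobj_quadratic_minorant:
  fixes W :: "complex^'n^'n" and B :: "complex^'N::finite^'n" and x :: "complex^'p"
  assumes eta: "eta > 0" and nu: "nu \<ge> 0" and W: "unitary W" and x: "norm x \<le> C"
    and thr: "thresholded eta P W B x"
    and x_min: "\<forall>x'. norm x' \<le> C \<longrightarrow> fit nu A y P W B x \<le> fit nu A y P W B x'"
    and W_min: "\<forall>W'. unitary W' \<longrightarrow> fit nu A y P W B x \<le> fit nu A y P W' B x"
    and r: "norm ((W', B', x') - (W, B, x)) < min (eta / 2) 1"
  defines "K \<equiv> 2 * (\<Sum>j\<in>UNIV. norm (P j) * (norm (col B j) + 1) + norm (P j *v x))"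
  shows "gobj nu eta C A y P W B x - ereal (K * (norm ((W', B', x') - (W, B, x)))\<^sup>2)
    \<le> gobj nu eta C A y P W' B' x'"
proof (cases "unitary W' \<and> norm x' \<le> C")
  case True
  define r where "r = norm ((W', B', x') - (W, B, x))"
  have "norm (W' - W, B' - B, x' - x) = r" by (simp add: r_def)
  hence "norm (W' - W) \<le> r" "norm (B' - B, x' - x) \<le> r"
    by (metis norm_fst_le norm_snd_le)+
  hence "norm (W' - W) \<le> r" "norm (B' - B) \<le> r" "norm (x' - x) \<le> r"
    by (meson norm_fst_le norm_snd_le order_trans)+
  moreover have "r < eta / 2" "r \<le> 1" using r by (simp_all add: r_def)
  ultimately have "\<forall>i j. cmod ((B' - B)$i$j) < eta / 2"
    using norm_matrix_entry_le[of "B' - B"] by (meson le_less_trans order_trans)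
  hence "gobj nu eta C A y P W B x \<le> gobj nu eta C A y P W B' x'"
    using gobj_local_min[OF eta nu W x thr x_min, of "B' - B" "x' - x"] by simp
  moreover have "fit nu A y P W B' x' - r\<^sup>2 * K \<le> fit nu A y P W' B' x'"
    unfolding K_def using fit_W_min_perturbation[OF W _ W_min] True \<open>norm (W' - W) \<le> r\<close>
      \<open>norm (B' - B) \<le> r\<close> \<open>norm (x' - x) \<le> r\<close> \<open>r \<le> 1\<close> by blast
  ultimately show ?thesis
    using True by (simp add: gobj_eq_fit W x mult.commute r_def)
qed (auto simp: gobj_eq_fit)

lemma good_points_intro:
  fixes W :: "complex^'n^'n" and B :: "complex^'N::finite^'n" and x :: "complex^'p"
  assumes eta: "eta > 0" and nu: "nu \<ge> 0" and W: "unitary W" and x: "norm x \<le> C"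
    and thr: "thresholded eta P W B x"
    and x_min: "\<forall>x'. norm x' \<le> C \<longrightarrow> fit nu A y P W B x \<le> fit nu A y P W B x'"
    and W_min: "\<forall>W'. unitary W' \<longrightarrow> fit nu A y P W B x \<le> fit nu A y P W' B x"
  shows "(W, B, x) \<in> good_points nu eta C A y P"
proof -
  let ?g = "gobj nu eta C A y P"
  have g: "?g W B x = ereal (fit nu A y P W B x + eta\<^sup>2 * nnz B)"
    by (simp add: gobj_eq_fit W x)
  define K where "K = 2 * (\<Sum>j\<in>UNIV. norm (P j) * (norm (col B j) + 1) + norm (P j *v x))"
  have "0 \<in> frechet_subdiff (\<lambda>(W', B', x'). ?g W' B' x') (W, B, x)"
  proof (rule zero_frechet_subdiff_of_quadratic_minorant)
    show "min (eta / 2) 1 > 0" "K \<ge> 0" using eta by (auto simp: K_def intro!: sum_nonneg)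
    show "\<forall>u. norm (u - (W, B, x)) < min (eta / 2) 1 \<longrightarrow>
        (case (W, B, x) of (W', B', x') \<Rightarrow> ?g W' B' x') - ereal (K * (norm (u - (W, B, x)))\<^sup>2)
          \<le> (case u of (W', B', x') \<Rightarrow> ?g W' B' x')"
      using gobj_quadratic_minorant[OF assms] by (auto simp: K_def)
  qed (simp add: g)
  hence "critical_point (\<lambda>(W', B', x'). ?g W' B' x') (W, B, x)"
    unfolding critical_point_def by (rule frechet_subdiff_subset_limiting)
  moreover have "?g W B x \<le> ?g W' B x" for W'
    using W_min by (cases "unitary W'") (simp_all add: g gobj_eq_fit W x)
  moreover have "?g W B x \<le> ?g W B' x" for B'
    using thresholded_min[OF eta thr] by (simp add: g gobj_eq_fit W x)
  moreover have "?g W B x \<le> ?g W B x'" for x'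
    using x_min by (cases "norm x' \<le> C") (simp_all add: g gobj_eq_fit W x)
  ultimately show ?thesis
    using gobj_local_min[OF eta nu W x thr x_min] by (simp add: good_points_def)
qed

section \<open>Limits\<close>

lemma tendsto_matrix_vector_mult:
  fixes M :: "'a \<Rightarrow> complex^'c^'r"
  assumes "(M \<longlongrightarrow> M0) F" "(v \<longlongrightarrow> v0) F"
  shows "((\<lambda>k. M k *v v k) \<longlongrightarrow> M0 *v v0) F"
  by (rule vec_tendstoI) (unfold matrix_vector_mult_def vec_lambda_beta, intro tendsto_intros assms)

lemma tendsto_matrix_mult:
  fixes M :: "'a \<Rightarrow> complex^'c^'r"
  assumes "(M \<longlongrightarrow> M0) F" "(N \<longlongrightarrow> N0) F"
  shows "((\<lambda>k. M k ** N k) \<longlongrightarrow> M0 ** N0) F"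
  by (intro vec_tendstoI) (unfold matrix_matrix_mult_def vec_lambda_beta, intro tendsto_intros assms)

lemma tendsto_adj:
  fixes M :: "'a \<Rightarrow> complex^'c^'r"
  assumes "(M \<longlongrightarrow> M0) F"
  shows "((\<lambda>k. adj (M k)) \<longlongrightarrow> adj M0) F"
  by (intro vec_tendstoI) (unfold adj_def vec_lambda_beta, intro tendsto_intros assms)

lemma tendsto_col:
  assumes "(B \<longlongrightarrow> B0) F"
  shows "((\<lambda>k. col (B k) j) \<longlongrightarrow> col B0 j) F"
  by (intro vec_tendstoI) (unfold col_def vec_lambda_beta, intro tendsto_intros assms)

lemma tendsto_fit:
  assumes "(W \<longlongrightarrow> W0) F" "(B \<longlongrightarrow> B0) F" "(x \<longlongrightarrow> x0) F"
  shows "((\<lambda>k. fit nu A y P (W k) (B k) (x k)) \<longlongrightarrow> fit nu A y P W0 B0 x0) F"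
  unfolding fit_def by (intro tendsto_intros tendsto_matrix_vector_mult tendsto_col assms)

lemma unitary_limit:
  assumes "W \<longlonglongrightarrow> W0" "\<forall>k. unitary (W k)"
  shows "unitary W0"
proof -
  have "(\<lambda>k. adj (W k) ** W k) \<longlonglongrightarrow> adj W0 ** W0"
    by (intro tendsto_matrix_mult tendsto_adj assms(1))
  moreover have "(\<lambda>k. adj (W k) ** W k) = (\<lambda>k. mat 1)" using assms(2) by simp
  ultimately show ?thesis using LIMSEQ_unique tendsto_const by metis
qed

lemma thr_rel_limit:
  assumes eta: "eta > 0" and a: "a \<longlonglongrightarrow> a0" and b: "b \<longlonglongrightarrow> b0"
    and thr: "\<forall>k. thr_rel eta (a k) (b k)"
  shows "thr_rel eta a0 b0"
proof (cases "b0 = 0")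
  case True
  have "cmod a0 \<le> eta"
  proof (rule ccontr)
    assume "\<not> cmod a0 \<le> eta"
    hence "\<forall>\<^sub>F k in sequentially. eta < cmod (a k)"
      using order_tendstoD(1)[OF tendsto_norm[OF a]] by simp
    moreover have "\<forall>\<^sub>F k in sequentially. cmod (b k) < eta"
      using tendsto_norm[OF b] True eta by (intro order_tendstoD(2)) auto
    ultimately have "\<forall>\<^sub>F k in sequentially. False"
    proof eventually_elim
      case (elim k)
      thus False using thr[rule_format, of k] by (auto simp: thr_rel_def)
    qed
    thus False by simp
  qed
  thus ?thesis using True by (simp add: thr_rel_def)
next
  case False
  have "\<forall>\<^sub>F k in sequentially. b k \<noteq> 0"
    using b False by (rule tendsto_imp_eventually_ne)
  hence ev: "\<forall>\<^sub>F k in sequentially. b k = a k \<and> eta \<le> cmod (a k)"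
    by eventually_elim (use thr in \<open>auto simp: thr_rel_def\<close>)
  hence "a \<longlonglongrightarrow> b0"
    by (intro Lim_transform_eventually[OF b]) (auto elim: eventually_mono)
  hence "a0 = b0" using a LIMSEQ_unique by blast
  moreover have "eta \<le> cmod a0"
    using ev by (intro tendsto_lowerbound[OF tendsto_norm[OF a]]) (auto elim: eventually_mono)
  ultimately show ?thesis by (simp add: thr_rel_def)
qed

text \<open>This is what makes the discontinuous \<open>\<ell>\<^sub>0\<close> term converge along the iterates.\<close>
lemma eventually_nonzero_iff_of_gap:
  assumes eta: "eta > 0" and b: "b \<longlonglongrightarrow> b0" and gap: "\<forall>k. b k = 0 \<or> eta \<le> cmod (b k)"
  shows "\<forall>\<^sub>F k in sequentially. (b k \<noteq> 0) = (b0 \<noteq> 0)"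
proof (cases "b0 = 0")
  case True
  have "\<forall>\<^sub>F k in sequentially. cmod (b k) < eta"
    using tendsto_norm[OF b] True eta by (intro order_tendstoD(2)) auto
  thus ?thesis by eventually_elim (use gap True in auto)
next
  case False
  show ?thesis using tendsto_imp_eventually_ne[OF b False] by (rule eventually_mono) (simp add: False)
qed

lemma infdist_tendsto_0_of_limit_points:
  fixes z :: "nat \<Rightarrow> 'a::heine_borel"
  assumes bounded: "bounded (range z)"
    and limits: "\<And>q r. strict_mono r \<Longrightarrow> (z \<circ> r) \<longlonglongrightarrow> q \<Longrightarrow> q \<in> S"
  shows "(\<lambda>t. infdist (z t) S) \<longlonglongrightarrow> 0"
proof (rule ccontr)
  assume "\<not> (\<lambda>t. infdist (z t) S) \<longlonglongrightarrow> 0"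
  then obtain e where "e > 0" and "\<forall>N. \<exists>n\<ge>N. e \<le> infdist (z n) S"
    unfolding LIMSEQ_iff by (auto simp: not_less infdist_nonneg)
  hence "infinite {n. e \<le> infdist (z n) S}"
    unfolding infinite_nat_iff_unbounded_le by simp
  then obtain h :: "nat \<Rightarrow> nat" where h: "strict_mono h" and far: "\<And>k. e \<le> infdist (z (h k)) S"
    using infinite_enumerate by blast
  have "bounded (range (z \<circ> h))" by (rule bounded_subset[OF bounded]) auto
  then obtain q r where r: "strict_mono r" and lim: "(z \<circ> h \<circ> r) \<longlonglongrightarrow> q"
    using bounded_imp_convergent_subsequence by blast
  hence "q \<in> S" using limits[of "h \<circ> r" q] strict_mono_o[OF h r] by (simp add: o_assoc)
  have near: "\<forall>\<^sub>F k in sequentially. dist ((z \<circ> h \<circ> r) k) q < e"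
    using lim \<open>e > 0\<close> by (rule tendstoD)
  have still_far: "e \<le> dist ((z \<circ> h \<circ> r) k) q" for k
    using far[of "r k"] infdist_le[OF \<open>q \<in> S\<close>, of "z (h (r k))"] by simp
  have "\<forall>\<^sub>F k in sequentially. False"
    using near by (rule eventually_mono) (meson still_far leD)
  thus False by simp
qed

lemma strict_mono_Suc_shift:
  assumes "strict_mono r"
  obtains s where "strict_mono s" "\<And>k. r (Suc k) = Suc (s k)"
proof
  define s where "s k = r (Suc k) - 1" for k
  have r: "r (Suc k) = Suc (s k)" for k
    using seq_suble[OF assms, of "Suc k"] by (simp add: s_def)
  thus "r (Suc k) = Suc (s k)" for k .
  have "s k < s (Suc k)" for k
    using strict_monoD[OF assms, of "Suc k" "Suc (Suc k)"] r[of k] r[of "Suc k"] by simp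
  thus "strict_mono s" by (simp add: strict_mono_Suc_iff)
qed

section \<open>Convergence of Algorithm A1\<close>

context
  fixes nu eta C :: real and A :: "complex^'p^'m" and y :: "complex^'m"
    and P :: "'N::finite \<Rightarrow> complex^'p^'n"
    and Ws :: "nat \<Rightarrow> complex^'n^'n" and Bs :: "nat \<Rightarrow> complex^'N^'n"
    and xs :: "nat \<Rightarrow> complex^'p"
  assumes nu: "nu > 0" and eta: "eta > 0" and A1: "alg_A1 nu eta C A y P Ws Bs xs"
begin

lemma A1_W_unitary: "unitary (Ws (Suc t))"
  and A1_W_min: "\<forall>W'. unitary W' \<longrightarrow>
      fit nu A y P (Ws (Suc t)) (Bs t) (xs t) \<le> fit nu A y P W' (Bs t) (xs t)"
proof -
  obtain U S V where svd: "full_svd (patch_mat P (xs t) ** adj (Bs t)) U S V"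
    and W: "Ws (Suc t) = V ** adj U"
    using A1 unfolding alg_A1_def by blast
  show "unitary (Ws (Suc t))" unfolding W by (rule full_svd_unitary[OF svd])
  show "\<forall>W'. unitary W' \<longrightarrow>
      fit nu A y P (Ws (Suc t)) (Bs t) (xs t) \<le> fit nu A y P W' (Bs t) (xs t)"
    unfolding W using procrustes_fit_le[OF svd] by blast
qed

lemma A1_thresholded: "thresholded eta P (Ws (Suc t)) (Bs (Suc t)) (xs t)"
proof -
  have "col (Bs (Suc t)) j = hard_thr eta (Ws (Suc t) *v (P j *v xs t))" for j
    using A1 unfolding alg_A1_def by blast
  hence "Bs (Suc t)$i$j = hard_thr eta (Ws (Suc t) *v (P j *v xs t)) $ i" for i j
    by (metis col_def vec_lambda_beta)
  thus ?thesis by (simp add: thresholded_def thr_rel_hard_thr)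
qed

lemma A1_x_norm: "norm (xs (Suc t)) \<le> C"
  and A1_x_min: "\<forall>x'. norm x' \<le> C \<longrightarrow>
      fit nu A y P (Ws (Suc t)) (Bs (Suc t)) (xs (Suc t)) \<le> fit nu A y P (Ws (Suc t)) (Bs (Suc t)) x'"
  using A1 unfolding alg_A1_def fit_def by blast+

definition energy :: "nat \<Rightarrow> real" where
  "energy t = fit nu A y P (Ws t) (Bs t) (xs t) + eta\<^sup>2 * nnz (Bs t)"

definition mid_energy :: "nat \<Rightarrow> real" where
  "mid_energy t = fit nu A y P (Ws (Suc t)) (Bs t) (xs t) + eta\<^sup>2 * nnz (Bs t)"

definition x_gain :: "nat \<Rightarrow> real" where
  "x_gain t = fit_quad nu A P (Ws (Suc t)) 0 (xs t - xs (Suc t))"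

lemma energy_nonneg: "0 \<le> energy t"
  using nu by (simp add: energy_def fit_nonneg nnz_def sum_nonneg)

lemma x_gain_nonneg: "0 \<le> x_gain t"
  using nu by (simp add: x_gain_def fit_quad_nonneg)

lemma mid_energy_le_energy: "mid_energy (Suc t) \<le> energy (Suc t)"
  using A1_W_min[of "Suc t"] A1_W_unitary[of t] by (simp add: mid_energy_def energy_def)

lemma energy_x_gain_le_mid_energy: "energy (Suc (Suc t)) + x_gain (Suc t) \<le> mid_energy (Suc t)"
proof -
  have "fit nu A y P (Ws (Suc (Suc t))) (Bs (Suc (Suc t))) (xs (Suc t)) + eta\<^sup>2 * nnz (Bs (Suc (Suc t)))
      \<le> mid_energy (Suc t)"
    unfolding mid_energy_def by (rule thresholded_min[OF eta A1_thresholded])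
  moreover have "fit nu A y P (Ws (Suc (Suc t))) (Bs (Suc (Suc t))) (xs (Suc (Suc t))) + x_gain (Suc t)
      \<le> fit nu A y P (Ws (Suc (Suc t))) (Bs (Suc (Suc t))) (xs (Suc t))"
    unfolding x_gain_def by (rule fit_min_cball_growth[OF A1_x_min A1_x_norm A1_x_norm])
  ultimately show ?thesis by (simp add: energy_def)
qed

lemma energy_converges: obtains E where "(\<lambda>t. energy (Suc t)) \<longlonglongrightarrow> E"
proof -
  have "energy (Suc (Suc t)) \<le> energy (Suc t)" for t
    using mid_energy_le_energy[of t] energy_x_gain_le_mid_energy[of t] x_gain_nonneg[of "Suc t"]
    by linarith
  hence "decseq (\<lambda>t. energy (Suc t))" by (simp add: decseq_Suc_iff)
  thus ?thesis by (rule decseq_convergent[of _ 0]) (use energy_nonneg that in auto)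
qed

lemma norm_patch_diff_le_x_gain: "(norm (P j *v xs (Suc t) - P j *v xs t))\<^sup>2 \<le> x_gain t"
proof -
  have "norm (P j *v xs (Suc t) - P j *v xs t) = norm (P j *v (xs t - xs (Suc t)))"
    by (simp add: matrix_vector_mult_diff_distrib norm_minus_commute)
  also have "\<dots> = norm (Ws (Suc t) *v (P j *v (xs t - xs (Suc t))) - col 0 j)"
    by (simp only: norm_unitary_mult[OF A1_W_unitary] col_zero diff_zero)
  also have "(\<dots>)\<^sup>2 \<le> (\<Sum>j\<in>UNIV. (norm (Ws (Suc t) *v (P j *v (xs t - xs (Suc t))) - col 0 j))\<^sup>2)"
    by (rule member_le_sum) auto
  also have "\<dots> \<le> x_gain t" using nu by (simp add: x_gain_def fit_quad_def)
  finally show ?thesis .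
qed

lemma patch_diff_tendsto_0: "(\<lambda>t. P j *v xs (Suc t) - P j *v xs t) \<longlonglongrightarrow> 0"
proof -
  obtain E where E: "(\<lambda>t. energy (Suc t)) \<longlonglongrightarrow> E" by (rule energy_converges)
  have "(\<lambda>t. energy (Suc t) - energy (Suc (Suc t))) \<longlonglongrightarrow> E - E"
    by (intro tendsto_diff E LIMSEQ_Suc[OF E])
  hence decrease: "(\<lambda>t. energy (Suc t) - energy (Suc (Suc t))) \<longlonglongrightarrow> 0" by simp
  have gain_le: "x_gain (Suc t) \<le> energy (Suc t) - energy (Suc (Suc t))" for t
    using energy_x_gain_le_mid_energy[of t] mid_energy_le_energy[of t] by linarith
  have "(\<lambda>t. x_gain (Suc t)) \<longlonglongrightarrow> 0"
    by (rule tendsto_sandwich[OF _ _ tendsto_const decrease])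
       (auto intro: always_eventually x_gain_nonneg gain_le)
  hence sqrt_gain: "(\<lambda>t. sqrt (x_gain (Suc t))) \<longlonglongrightarrow> 0" using tendsto_real_sqrt by fastforce
  have diff_le: "norm (P j *v xs (Suc (Suc t)) - P j *v xs (Suc t)) \<le> sqrt (x_gain (Suc t))" for t
    using norm_patch_diff_le_x_gain by (simp add: real_le_rsqrt)
  have "(\<lambda>t. norm (P j *v xs (Suc (Suc t)) - P j *v xs (Suc t))) \<longlonglongrightarrow> 0"
    by (rule tendsto_sandwich[OF _ _ tendsto_const sqrt_gain]) (auto intro: always_eventually diff_le)
  hence "(\<lambda>t. P j *v xs (Suc (Suc t)) - P j *v xs (Suc t)) \<longlonglongrightarrow> 0"
    by (simp add: tendsto_norm_zero_iff)
  thus ?thesis by (rule LIMSEQ_imp_Suc)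
qed

context
  fixes s :: "nat \<Rightarrow> nat" and Wq Bq xq
  assumes s: "strict_mono s"
    and W_lim: "(\<lambda>k. Ws (Suc (s k))) \<longlonglongrightarrow> Wq"
    and B_lim: "(\<lambda>k. Bs (Suc (s k))) \<longlonglongrightarrow> Bq"
    and x_lim: "(\<lambda>k. xs (Suc (s k))) \<longlonglongrightarrow> xq"
begin

lemma limit_thresholded: "thresholded eta P Wq Bq xq"
proof -
  have patch_lim: "(\<lambda>k. P j *v xs (s k)) \<longlonglongrightarrow> P j *v xq" for j
  proof -
    have "(\<lambda>k. P j *v xs (Suc (s k)) - P j *v xs (s k)) \<longlonglongrightarrow> 0"
      using LIMSEQ_subseq_LIMSEQ[OF patch_diff_tendsto_0 s] by (simp add: o_def)
    hence "(\<lambda>k. P j *v xs (Suc (s k)) - (P j *v xs (Suc (s k)) - P j *v xs (s k))) \<longlonglongrightarrow> P j *v xq - 0"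
      by (intro tendsto_diff tendsto_matrix_vector_mult tendsto_const x_lim)
    thus ?thesis by simp
  qed
  have "thr_rel eta ((Wq *v (P j *v xq))$i) (Bq$i$j)" for i j
  proof (rule thr_rel_limit[OF eta])
    show "(\<lambda>k. (Ws (Suc (s k)) *v (P j *v xs (s k)))$i) \<longlonglongrightarrow> (Wq *v (P j *v xq))$i"
      by (intro tendsto_vec_nth tendsto_matrix_vector_mult W_lim patch_lim)
    show "(\<lambda>k. Bs (Suc (s k))$i$j) \<longlonglongrightarrow> Bq$i$j"
      by (intro tendsto_vec_nth B_lim)
    show "\<forall>k. thr_rel eta ((Ws (Suc (s k)) *v (P j *v xs (s k)))$i) (Bs (Suc (s k))$i$j)"
      using A1_thresholded by (simp add: thresholded_def)
  qed
  thus ?thesis by (simp add: thresholded_def)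
qed

lemma limit_x_min: "\<forall>x'. norm x' \<le> C \<longrightarrow> fit nu A y P Wq Bq xq \<le> fit nu A y P Wq Bq x'"
proof (intro allI impI)
  fix x' :: "complex^'p" assume "norm x' \<le> C"
  show "fit nu A y P Wq Bq xq \<le> fit nu A y P Wq Bq x'"
    by (rule tendsto_le[OF _ tendsto_fit[OF W_lim B_lim tendsto_const] tendsto_fit[OF W_lim B_lim x_lim]])
       (use A1_x_min \<open>norm x' \<le> C\<close> in auto)
qed

lemma limit_nnz_eventually: "\<forall>\<^sub>F k in sequentially. nnz (Bs (Suc (s k))) = nnz Bq"
proof -
  have "\<forall>\<^sub>F k in sequentially. \<forall>i j. (Bs (Suc (s k))$i$j \<noteq> 0) = (Bq$i$j \<noteq> 0)"
  proof (intro eventually_all_finite)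
    fix i j
    have "\<forall>k. Bs (Suc (s k))$i$j = 0 \<or> eta \<le> cmod (Bs (Suc (s k))$i$j)"
      using A1_thresholded[unfolded thresholded_def thr_rel_def] by metis
    thus "\<forall>\<^sub>F k in sequentially. (Bs (Suc (s k))$i$j \<noteq> 0) = (Bq$i$j \<noteq> 0)"
      by (intro eventually_nonzero_iff_of_gap[OF eta] tendsto_vec_nth B_lim)
  qed
  thus ?thesis by (rule eventually_mono) (simp add: nnz_eq_sum)
qed

lemma limit_energy:
  "(\<lambda>k. energy (Suc (s k))) \<longlonglongrightarrow> fit nu A y P Wq Bq xq + eta\<^sup>2 * nnz Bq"
proof -
  have "(\<lambda>k. fit nu A y P (Ws (Suc (s k))) (Bs (Suc (s k))) (xs (Suc (s k))) + eta\<^sup>2 * nnz Bq)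
      \<longlonglongrightarrow> fit nu A y P Wq Bq xq + eta\<^sup>2 * nnz Bq"
    by (intro tendsto_add tendsto_fit W_lim B_lim x_lim tendsto_const)
  moreover have "\<forall>\<^sub>F k in sequentially. fit nu A y P (Ws (Suc (s k))) (Bs (Suc (s k))) (xs (Suc (s k)))
      + eta\<^sup>2 * nnz Bq = energy (Suc (s k))"
    using limit_nnz_eventually by (rule eventually_mono) (simp add: energy_def)
  ultimately show ?thesis by (rule Lim_transform_eventually)
qed

text \<open>The W-update at step \<open>s k + 1\<close> sees \<open>(B, x)\<close> from step \<open>s k\<close>, which need not converge.
  Instead, the energy after that update is squeezed between consecutive values of the
  convergent energy.\<close>
lemma limit_mid_energy:
  "(\<lambda>k. mid_energy (Suc (s k))) \<longlonglongrightarrow> fit nu A y P Wq Bq xq + eta\<^sup>2 * nnz Bq"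
proof -
  obtain E where E: "(\<lambda>t. energy (Suc t)) \<longlonglongrightarrow> E" by (rule energy_converges)
  have E1: "(\<lambda>k. energy (Suc (s k))) \<longlonglongrightarrow> E"
    using LIMSEQ_subseq_LIMSEQ[OF E s] by (simp add: o_def)
  have E2: "(\<lambda>k. energy (Suc (Suc (s k)))) \<longlonglongrightarrow> E"
    using LIMSEQ_subseq_LIMSEQ[OF LIMSEQ_Suc[OF E] s] by (simp add: o_def)
  have E_eq: "E = fit nu A y P Wq Bq xq + eta\<^sup>2 * nnz Bq"
    using E1 limit_energy LIMSEQ_unique by blast
  have "energy (Suc (Suc t)) \<le> mid_energy (Suc t)" for t
    using energy_x_gain_le_mid_energy[of t] x_gain_nonneg[of "Suc t"] by linarith
  hence "(\<lambda>k. mid_energy (Suc (s k))) \<longlonglongrightarrow> E"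
    by (intro tendsto_sandwich[OF _ _ E2 E1] always_eventually allI mid_energy_le_energy)
  thus ?thesis by (simp add: E_eq)
qed

lemma limit_W_min: "\<forall>W'. unitary W' \<longrightarrow> fit nu A y P Wq Bq xq \<le> fit nu A y P W' Bq xq"
proof (intro allI impI)
  fix W' :: "complex^'n^'n" assume "unitary W'"
  have "(\<lambda>k. mid_energy (Suc (s k)) - eta\<^sup>2 * nnz Bq) \<longlonglongrightarrow> fit nu A y P Wq Bq xq"
    using tendsto_diff[OF limit_mid_energy tendsto_const[of "eta\<^sup>2 * nnz Bq"]] by simp
  moreover have "\<forall>\<^sub>F k in sequentially. mid_energy (Suc (s k)) - eta\<^sup>2 * nnz Bq
      = fit nu A y P (Ws (Suc (Suc (s k)))) (Bs (Suc (s k))) (xs (Suc (s k)))"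
    using limit_nnz_eventually by (rule eventually_mono) (simp add: mid_energy_def)
  ultimately have fit_lim: "(\<lambda>k. fit nu A y P (Ws (Suc (Suc (s k)))) (Bs (Suc (s k))) (xs (Suc (s k))))
      \<longlonglongrightarrow> fit nu A y P Wq Bq xq"
    by (rule Lim_transform_eventually)
  show "fit nu A y P Wq Bq xq \<le> fit nu A y P W' Bq xq"
    by (rule tendsto_le[OF _ tendsto_fit[OF tendsto_const B_lim x_lim] fit_lim])
       (use A1_W_min \<open>unitary W'\<close> in auto)
qed

lemma limit_good: "(Wq, Bq, xq) \<in> good_points nu eta C A y P"
proof (rule good_points_intro[OF eta _ _ _ limit_thresholded limit_x_min limit_W_min])
  show "0 \<le> nu" using nu by simp
  show "unitary Wq" using W_lim by (rule unitary_limit) (simp add: A1_W_unitary)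
  show "norm xq \<le> C" by (rule Lim_norm_ubound[OF _ x_lim]) (auto intro: always_eventually A1_x_norm)
qed

end

lemma A1_limit_points_good:
  assumes "strict_mono r" "((\<lambda>t. (Ws t, Bs t, xs t)) \<circ> r) \<longlonglongrightarrow> q"
  shows "q \<in> good_points nu eta C A y P"
proof -
  obtain s where s: "strict_mono s" and r: "\<And>k. r (Suc k) = Suc (s k)"
    using strict_mono_Suc_shift[OF assms(1)] by blast
  obtain Wq Bq xq where q: "q = (Wq, Bq, xq)" by (cases q)
  have lim: "(\<lambda>k. (Ws (Suc (s k)), Bs (Suc (s k)), xs (Suc (s k)))) \<longlonglongrightarrow> (Wq, Bq, xq)"
    using LIMSEQ_Suc[OF assms(2)] by (simp add: o_def r q)
  show ?thesis unfolding q
    by (rule limit_good[OF s]) (use tendsto_fst[OF lim] tendsto_fst[OF tendsto_snd[OF lim]]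
        tendsto_snd[OF tendsto_snd[OF lim]] in simp_all)
qed

lemma A1_norm_B_le: "norm (Bs (Suc (Suc t))) \<le> sqrt (\<Sum>j\<in>UNIV. (norm (P j) * C)\<^sup>2)"
proof -
  have "norm (col (Bs (Suc (Suc t))) j) \<le> norm (P j) * C" for j
  proof -
    have "norm (col (Bs (Suc (Suc t))) j) \<le> norm (Ws (Suc (Suc t)) *v (P j *v xs (Suc t)))"
      using A1_thresholded[of "Suc t"] unfolding norm_vec_def col_def thresholded_def
      by (intro L2_set_mono) (auto intro: thr_rel_norm_le)
    also have "\<dots> = norm (P j *v xs (Suc t))" by (rule norm_unitary_mult[OF A1_W_unitary])
    also have "\<dots> \<le> norm (P j) * C"
      using norm_matrix_vector_mult_le[of "P j"] A1_x_norm[of t]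
      by (meson mult_left_mono norm_ge_zero order_trans)
    finally show ?thesis .
  qed
  hence "(norm (Bs (Suc (Suc t))))\<^sup>2 \<le> (\<Sum>j\<in>UNIV. (norm (P j) * C)\<^sup>2)"
    unfolding power2_norm_matrix_eq_sum_col by (intro sum_mono power_mono) auto
  thus ?thesis by (rule real_le_rsqrt)
qed

lemma A1_bounded: "bounded (range (\<lambda>t. (Ws t, Bs t, xs t)))"
proof -
  let ?z = "\<lambda>t. (Ws t, Bs t, xs t)"
  have "norm (?z (Suc (Suc t)))
      \<le> sqrt (real CARD('n)) + sqrt (\<Sum>j\<in>UNIV. (norm (P j) * C)\<^sup>2) + C" for t
    using norm_Pair_le[of "Ws (Suc (Suc t))" "(Bs (Suc (Suc t)), xs (Suc (Suc t)))"]
      norm_Pair_le[of "Bs (Suc (Suc t))" "xs (Suc (Suc t))"]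
      norm_unitary[OF A1_W_unitary[of "Suc t"]] A1_norm_B_le[of t] A1_x_norm[of "Suc t"]
    by linarith
  hence "bounded (range (\<lambda>t. ?z (Suc (Suc t))))"
    unfolding bounded_iff by blast
  moreover have "range ?z \<subseteq> {?z 0, ?z 1} \<union> range (\<lambda>t. ?z (Suc (Suc t)))"
  proof (rule image_subsetI)
    fix t show "?z t \<in> {?z 0, ?z 1} \<union> range (\<lambda>t. ?z (Suc (Suc t)))"
    proof (cases t)
      case (Suc u) thus ?thesis by (cases u) auto
    qed simp
  qed
  ultimately show ?thesis by (meson bounded_Un bounded_subset finite_imp_bounded finite.emptyI finite_insert)
qed

end

theorem corollary2:
  fixes A :: "complex^'p^'m" and y :: "complex^'m"
    and P :: "'N::finite \<Rightarrow> complex^'p^'n"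
    and nu eta C :: real
    and Ws :: "nat \<Rightarrow> complex^'n^'n" and Bs :: "nat \<Rightarrow> complex^'N^'n"
    and xs :: "nat \<Rightarrow> complex^'p"
  assumes "nu > 0" and "eta > 0" and "C > 0"
    and "\<forall>j. patch_op (P j)"
    and "alg_A1 nu eta C A y P Ws Bs xs"
  shows "(\<exists>q r. strict_mono r \<and> ((\<lambda>t. (Ws t, Bs t, xs t)) \<circ> r) \<longlonglongrightarrow> q)
    \<and> (\<forall>q r. strict_mono r \<and> ((\<lambda>t. (Ws t, Bs t, xs t)) \<circ> r) \<longlonglongrightarrow> q
            \<longrightarrow> q \<in> good_points nu eta C A y P)
    \<and> (\<lambda>t. infdist (Ws t, Bs t, xs t) (good_points nu eta C A y P)) \<longlonglongrightarrow> 0"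
proof -
  let ?z = "\<lambda>t. (Ws t, Bs t, xs t)"
  have bounded: "bounded (range ?z)"
    by (rule A1_bounded[OF assms(1,2,5)])
  have limits: "q \<in> good_points nu eta C A y P" if "strict_mono r" "(?z \<circ> r) \<longlonglongrightarrow> q" for q r
    using A1_limit_points_good[OF assms(1,2,5) that] .
  have "(\<lambda>t. infdist (?z t) (good_points nu eta C A y P)) \<longlonglongrightarrow> 0"
    using bounded limits by (rule infdist_tendsto_0_of_limit_points)
  thus ?thesis
    using bounded_imp_convergent_subsequence[OF bounded] limits by blast
qed

end
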